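(* For a biconnected $K_4$-minor-free graph $G$, the following statements are equivalent: (1) For some $v\in V(G)$, $G$ has a $1$-perfect orientation in which $v$ is a sink. (2) For every $v\in V(G)$, $G$ has a $1$-perfect orientation in which $v$ is a sink. (3) $G$ is chordal. (4) $G$ is either $K_1$ or a $2$-tree.
   Context: A graph is biconnected if it is connected and has no cut vertex. An orientation of $G$ is $1$-perfect if for every vertex the out-neighborhood is a clique in $G$. A sink is a vertex of out-degree $0$. A graph is chordal if it has no induced cycle of length at least $4$. $2$-trees: $K_2$ is a $2$-tree, and adding to a $2$-tree a new vertex adjacent to exactly two adjacent vertices yields a $2$-tree; there are no others. *)

theory Defs
  imports Main
begin

definition graph :: "'a set \<Rightarrow> 'a set set \<Rightarrow> bool" where
  "graph V E \<longleftrightarrow> finite V \<and> (\<forall>e\<in>E. \<exists>u v. u \<noteq> v \<and> u \<in> V \<and> v \<in> V \<and> e = {u, v})"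

definition reach_in :: "'a set set \<Rightarrow> 'a set \<Rightarrow> 'a \<Rightarrow> 'a \<Rightarrow> bool" where
  "reach_in E S u v \<longleftrightarrow> (\<lambda>x y. x \<in> S \<and> y \<in> S \<and> {x, y} \<in> E)\<^sup>*\<^sup>* u v"

definition connected_in :: "'a set set \<Rightarrow> 'a set \<Rightarrow> bool" where
  "connected_in E S \<longleftrightarrow> S \<noteq> {} \<and> (\<forall>u\<in>S. \<forall>v\<in>S. reach_in E S u v)"

definition cut_vertex :: "'a set \<Rightarrow> 'a set set \<Rightarrow> 'a \<Rightarrow> bool" where
  "cut_vertex V E v \<longleftrightarrow> v \<in> V \<and>
     (\<exists>u\<in>V - {v}. \<exists>w\<in>V - {v}. \<not> reach_in E (V - {v}) u w)"

definition biconnected :: "'a set \<Rightarrow> 'a set set \<Rightarrow> bool" where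
  "biconnected V E \<longleftrightarrow> connected_in E V \<and> \<not> (\<exists>v. cut_vertex V E v)"

definition has_K4_minor :: "'a set \<Rightarrow> 'a set set \<Rightarrow> bool" where
  "has_K4_minor V E \<longleftrightarrow> (\<exists>B :: nat \<Rightarrow> 'a set.
     (\<forall>i<4. B i \<subseteq> V \<and> connected_in E (B i)) \<and>
     (\<forall>i<4. \<forall>j<4. i \<noteq> j \<longrightarrow> B i \<inter> B j = {} \<and>
        (\<exists>x\<in>B i. \<exists>y\<in>B j. {x, y} \<in> E)))"

text \<open>An orientation: D x y means the edge {x,y} is oriented from x to y.\<close>
definition orientation :: "'a set \<Rightarrow> 'a set set \<Rightarrow> ('a \<Rightarrow> 'a \<Rightarrow> bool) \<Rightarrow> bool" where
  "orientation V E D \<longleftrightarrow>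
     (\<forall>x y. D x y \<longrightarrow> {x, y} \<in> E) \<and>
     (\<forall>x y. {x, y} \<in> E \<longrightarrow> (D x y \<longleftrightarrow> \<not> D y x))"

definition one_perfect_orientation :: "'a set \<Rightarrow> 'a set set \<Rightarrow> ('a \<Rightarrow> 'a \<Rightarrow> bool) \<Rightarrow> bool" where
  "one_perfect_orientation V E D \<longleftrightarrow> orientation V E D \<and>
     (\<forall>v\<in>V. \<forall>x y. D v x \<and> D v y \<and> x \<noteq> y \<longrightarrow> {x, y} \<in> E)"

definition sink :: "('a \<Rightarrow> 'a \<Rightarrow> bool) \<Rightarrow> 'a \<Rightarrow> bool" where
  "sink D v \<longleftrightarrow> (\<forall>x. \<not> D v x)"

definition induced_cycle :: "'a set \<Rightarrow> 'a set set \<Rightarrow> 'a list \<Rightarrow> bool" where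
  "induced_cycle V E cs \<longleftrightarrow> length cs \<ge> 3 \<and> distinct cs \<and> set cs \<subseteq> V \<and>
     (\<forall>i<length cs. \<forall>j<length cs.
        {cs ! i, cs ! j} \<in> E \<longleftrightarrow> (j = Suc i mod length cs \<or> i = Suc j mod length cs))"

definition chordal :: "'a set \<Rightarrow> 'a set set \<Rightarrow> bool" where
  "chordal V E \<longleftrightarrow> \<not> (\<exists>cs. induced_cycle V E cs \<and> length cs \<ge> 4)"

inductive two_tree :: "'a set \<Rightarrow> 'a set set \<Rightarrow> bool" where
  base: "a \<noteq> b \<Longrightarrow> two_tree {a, b} {{a, b}}"
| step: "two_tree V E \<Longrightarrow> {x, y} \<in> E \<Longrightarrow> z \<notin> V \<Longrightarrow>
           two_tree (insert z V) (E \<union> {{z, x}, {z, y}})"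

definition is_K1 :: "'a set \<Rightarrow> 'a set set \<Rightarrow> bool" where
  "is_K1 V E \<longleftrightarrow> (\<exists>v. V = {v}) \<and> E = {}"

end

theory Submission
  imports Defs
begin

text \<open>
  (1) \<open>\<Longrightarrow>\<close> (3): in a \<open>1\<close>-perfect orientation an induced cycle \<open>C\<close> of length at least four is a
  directed cycle, since a vertex with both cycle neighbours as out-neighbours would create a chord.
  Let \<open>K\<close> be the component of \<open>G - C\<close> containing the sink \<open>v\<close>. An arc from a cycle vertex into \<open>K\<close>
  makes the next cycle vertex adjacent to \<open>K\<close> as well, so if every cycle vertex adjacent to \<open>K\<close> had
  such an arc, \<open>K\<close> would be adjacent to all of \<open>C\<close> and contracting \<open>K\<close> would give a \<open>K\<^sub>4\<close> minor.
  Otherwise some cycle vertex \<open>c\<close> adjacent to \<open>K\<close> and \<open>v\<close> are both sinks of the orientation restricted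
  to the connected set \<open>K \<union> {c}\<close>, which is impossible: along a chordless path all arcs point the
  same way.

  (3) \<open>\<Longrightarrow>\<close> (4): by Dirac's lemma a chordal graph has a simplicial vertex \<open>z\<close>. Biconnectivity and
  \<open>K\<^sub>4\<close>-freeness force \<open>z\<close> to have exactly two neighbours, which are adjacent, and deleting \<open>z\<close>
  preserves all hypotheses; induction yields a \<open>2\<close>-tree.

  (4) \<open>\<Longrightarrow>\<close> (2): along the construction of a \<open>2\<close>-tree one maintains, for every edge \<open>xy\<close>, a
  \<open>1\<close>-perfect orientation in which \<open>x\<close> is a sink and the only out-neighbour of \<open>y\<close>.
\<close>

lemma reach_in_refl [simp]: "reach_in E S u u"
  unfolding reach_in_def by simp

lemma reach_in_edge: "x \<in> S \<Longrightarrow> y \<in> S \<Longrightarrow> {x, y} \<in> E \<Longrightarrow> reach_in E S x y"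
  unfolding reach_in_def by auto

lemma reach_in_trans: "reach_in E S u v \<Longrightarrow> reach_in E S v w \<Longrightarrow> reach_in E S u w"
  unfolding reach_in_def by (rule rtranclp_trans)

lemma reach_in_mono: "reach_in E S u w \<Longrightarrow> S \<subseteq> T \<Longrightarrow> reach_in E T u w"
  unfolding reach_in_def by (erule rtranclp_mono[THEN predicate2D, rotated]) auto

lemma reach_in_sym: "reach_in E S u w \<Longrightarrow> reach_in E S w u"
  unfolding reach_in_def
proof (induction rule: rtranclp_induct)
  case (step y z)
  then have "z \<in> S \<and> y \<in> S \<and> {z, y} \<in> E" by (auto simp: insert_commute)
  then show ?case using step(3) by (rule converse_rtranclp_into_rtranclp)
qed simp

lemma reach_in_first_edge:
  "reach_in E S u w \<Longrightarrow> u \<noteq> w \<Longrightarrow> u \<in> S \<and> (\<exists>x\<in>S. {u, x} \<in> E)"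
  unfolding reach_in_def by (erule converse_rtranclpE) auto

lemma reach_in_delete_vertex_edges: "z \<notin> S \<Longrightarrow> reach_in {e\<in>E. z \<notin> e} S = reach_in E S"
  unfolding reach_in_def[abs_def] by (intro ext arg_cong[where f = rtranclp]) auto

lemma reach_in_component:
  assumes "reach_in E U v x"
  shows "reach_in E {y\<in>U. reach_in E U v y} v x"
proof -
  define K where "K = {y\<in>U. reach_in E U v y}"
  have "(\<lambda>x y. x \<in> U \<and> y \<in> U \<and> {x, y} \<in> E)\<^sup>*\<^sup>* v x" using assms unfolding reach_in_def .
  then have "reach_in E K v x"
  proof (induction rule: rtranclp_induct)
    case (step y z)
    have "reach_in E U v y" "reach_in E U v z"
      using step(1,2) unfolding reach_in_def by (auto intro: rtranclp.rtrancl_into_rtrancl)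
    then have "reach_in E K y z" using step(2) unfolding K_def by (intro reach_in_edge) simp_all
    then show ?case using step(3) by (rule reach_in_trans[rotated])
  qed simp
  then show ?thesis unfolding K_def .
qed

subsection \<open>Chordless walks\<close>

definition walk :: "('a \<Rightarrow> 'a \<Rightarrow> bool) \<Rightarrow> 'a list \<Rightarrow> bool" where
  "walk R ps \<longleftrightarrow> ps \<noteq> [] \<and> (\<forall>i. Suc i < length ps \<longrightarrow> R (ps ! i) (ps ! Suc i))"

definition chordless :: "('a \<Rightarrow> 'a \<Rightarrow> bool) \<Rightarrow> 'a list \<Rightarrow> bool" where
  "chordless R ps \<longleftrightarrow> (\<forall>i j. Suc i < j \<and> j < length ps \<longrightarrow> \<not> R (ps ! i) (ps ! j))"

lemma walk_mono: "walk R ps \<Longrightarrow> (\<And>x y. R x y \<Longrightarrow> Q x y) \<Longrightarrow> walk Q ps"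
  unfolding walk_def by auto

lemma walk_set:
  assumes "walk R ps" "2 \<le> length ps" "\<And>x y. R x y \<Longrightarrow> P x \<and> P y"
  shows "\<forall>x\<in>set ps. P x"
proof
  fix x assume "x \<in> set ps"
  then obtain k where k: "k < length ps" "x = ps ! k" by (auto simp: in_set_conv_nth)
  show "P x"
  proof (cases "Suc k < length ps")
    case True
    then show ?thesis using assms k unfolding walk_def by blast
  next
    case False
    then obtain j where "k = Suc j" using k assms(2) by (cases k) auto
    then show ?thesis using assms k unfolding walk_def by blast
  qed
qed

lemma rtranclp_walk: "R\<^sup>*\<^sup>* x y \<Longrightarrow> \<exists>ps. walk R ps \<and> hd ps = x \<and> last ps = y"
proof (induction rule: rtranclp_induct)
  case base then show ?case by (intro exI[of _ "[x]"]) (simp add: walk_def)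
next
  case (step y z)
  then obtain ps where ps: "walk R ps" "hd ps = x" "last ps = y" by auto
  have "walk R (ps @ [z])"
    unfolding walk_def
  proof (intro conjI allI impI)
    fix i assume i: "Suc i < length (ps @ [z])"
    show "R ((ps @ [z]) ! i) ((ps @ [z]) ! Suc i)"
    proof (cases "Suc i < length ps")
      case True then show ?thesis using ps(1) by (simp add: walk_def nth_append)
    next
      case False
      then have "Suc i = length ps" using i by simp
      then have "ps ! i = last ps" using ps(1) by (metis diff_Suc_1 last_conv_nth walk_def)
      then show ?thesis using \<open>Suc i = length ps\<close> ps step(2) by (simp add: nth_append)
    qed
  qed simp
  moreover have "hd (ps @ [z]) = x" using ps by (simp add: walk_def)
  ultimately show ?case using ps(3) by (intro exI[of _ "ps @ [z]"]) simp
qed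

lemma walk_shortcut:
  assumes w: "walk R ps" and mj: "m \<le> j" "j < length ps"
    and c: "m = 0 \<or> R (ps ! (m - 1)) (ps ! j)"
  shows "walk R (take m ps @ drop j ps)"
  unfolding walk_def
proof (intro conjI allI impI)
  show "take m ps @ drop j ps \<noteq> []" using mj by simp
  fix k assume k: "Suc k < length (take m ps @ drop j ps)"
  show "R ((take m ps @ drop j ps) ! k) ((take m ps @ drop j ps) ! Suc k)"
  proof (cases rule: linorder_cases[of "Suc k" m])
    case less then show ?thesis using w mj by (simp add: nth_append walk_def)
  next
    case equal then show ?thesis using c mj by (auto simp: nth_append)
  next
    case greater
    then have "(take m ps @ drop j ps) ! k = ps ! (j + (k - m))"
      "(take m ps @ drop j ps) ! Suc k = ps ! Suc (j + (k - m))"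
      using mj by (simp_all add: nth_append Suc_diff_le)
    moreover have "Suc (j + (k - m)) < length ps" using k greater mj by simp
    ultimately show ?thesis using w by (simp add: walk_def)
  qed
qed

text \<open>A shortest walk is a chordless path.\<close>

lemma rtranclp_chordless_walk:
  assumes "R\<^sup>*\<^sup>* x y"
  shows "\<exists>ps. walk R ps \<and> hd ps = x \<and> last ps = y \<and> distinct ps \<and> chordless R ps"
proof -
  let ?P = "\<lambda>ps. walk R ps \<and> hd ps = x \<and> last ps = y"
  obtain ps0 where "?P ps0" using rtranclp_walk[OF assms] by auto
  then obtain ps where P: "?P ps" and min: "\<And>qs. ?P qs \<Longrightarrow> length ps \<le> length qs"
    using ex_has_least_nat[of ?P ps0 length] by blast
  have ne: "ps \<noteq> []" using P by (simp add: walk_def)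
  have shortcut: "?P (take m ps @ drop j ps)"
    if "m \<le> j" "j < length ps" "m = 0 \<or> R (ps ! (m - 1)) (ps ! j)" "m = 0 \<longrightarrow> ps ! j = x" for m j
  proof -
    have "hd (take m ps @ drop j ps) = x"
      using that P ne by (cases m) (simp_all add: hd_drop_conv_nth hd_append hd_take)
    then show ?thesis using walk_shortcut[of R ps m j] that P by (simp add: last_append)
  qed
  have "distinct ps"
  proof (rule ccontr)
    assume "\<not> distinct ps"
    then obtain i j where ij: "i < j" "j < length ps" "ps ! i = ps ! j"
      by (metis distinct_conv_nth linorder_neqE_nat)
    have "i = 0 \<or> R (ps ! (i - 1)) (ps ! j)"
      using P ij unfolding walk_def by (cases i) (auto, metis Suc_lessD less_trans_Suc)
    moreover have "i = 0 \<longrightarrow> ps ! j = x" using P ij ne by (auto simp: hd_conv_nth)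
    ultimately have "length ps \<le> length (take i ps @ drop j ps)"
      using ij by (intro min shortcut) auto
    then show False using ij by simp
  qed
  moreover have "chordless R ps"
    unfolding chordless_def
  proof (intro allI impI notI)
    fix i j assume ij: "Suc i < j \<and> j < length ps" and "R (ps ! i) (ps ! j)"
    then have "length ps \<le> length (take (Suc i) ps @ drop j ps)" by (intro min shortcut) auto
    then show False using ij by (simp add: min_def split: if_splits; arith)
  qed
  ultimately show ?thesis using P by blast
qed

definition clique :: "'a set set \<Rightarrow> 'a set \<Rightarrow> bool" where
  "clique E W \<longleftrightarrow> (\<forall>x\<in>W. \<forall>y\<in>W. x \<noteq> y \<longrightarrow> {x, y} \<in> E)"

definition simplicial :: "'a set set \<Rightarrow> 'a set \<Rightarrow> 'a \<Rightarrow> bool" where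
  "simplicial E W z \<longleftrightarrow> clique E {x\<in>W. {z, x} \<in> E}"

lemma simplicialD:
  "simplicial E W z \<Longrightarrow> x \<in> W \<Longrightarrow> y \<in> W \<Longrightarrow> {z, x} \<in> E \<Longrightarrow> {z, y} \<in> E \<Longrightarrow> x \<noteq> y \<Longrightarrow> {x, y} \<in> E"
  unfolding simplicial_def clique_def by blast

lemma graph_no_loop: "graph V E \<Longrightarrow> {x} \<notin> E"
  unfolding graph_def by (metis doubleton_eq_iff insert_absorb2)

lemma graph_edgeD: "graph V E \<Longrightarrow> {x, y} \<in> E \<Longrightarrow> x \<in> V \<and> y \<in> V \<and> x \<noteq> y"
  unfolding graph_def by (metis doubleton_eq_iff insert_absorb2)

lemma reach_in_remove_simplicial:
  assumes zS: "z \<in> S" and simp: "simplicial E S z" and noloop: "{z} \<notin> E"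
    and r: "reach_in E S u w" and "u \<noteq> z" and "w \<noteq> z"
  shows "reach_in E (S - {z}) u w"
proof -
  txt \<open>A walk through \<open>z\<close> can bypass it, since the two neighbours of \<open>z\<close> on the walk are adjacent.\<close>
  have "(w \<noteq> z \<longrightarrow> reach_in E (S - {z}) u w) \<and>
        (w = z \<longrightarrow> (\<exists>p. p \<in> S - {z} \<and> {z, p} \<in> E \<and> reach_in E (S - {z}) u p))"
    using r unfolding reach_in_def[of E S]
  proof (induction rule: rtranclp_induct)
    case base then show ?case using \<open>u \<noteq> z\<close> by simp
  next
    case (step y t)
    show ?case
    proof (cases "y = z")
      case True
      then obtain p where p: "p \<in> S - {z}" "{z, p} \<in> E" "reach_in E (S - {z}) u p"
        using step by auto
      have tz: "t \<noteq> z" using step(2) True noloop by auto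
      have "reach_in E (S - {z}) p t"
      proof (cases "p = t")
        case False
        then have "{p, t} \<in> E" using simplicialD[OF simp] p step(2) True by auto
        then show ?thesis using p step(2) tz by (intro reach_in_edge) auto
      qed simp
      then show ?thesis using p tz reach_in_trans by metis
    next
      case False
      then have ry: "reach_in E (S - {z}) u y" using step by auto
      show ?thesis
      proof (cases "t = z")
        case True then show ?thesis using ry step(2) False by (auto simp: insert_commute)
      next
        case False
        then have "reach_in E (S - {z}) y t" using step(2) \<open>y \<noteq> z\<close> by (intro reach_in_edge) auto
        then show ?thesis using ry False reach_in_trans by metis
      qed
    qed
  qed
  then show ?thesis using \<open>w \<noteq> z\<close> by simp
qed

lemma connected_in_walk:
  assumes "walk (\<lambda>x y. {x, y} \<in> E) ps"
  shows "connected_in E (set ps)"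
  unfolding connected_in_def
proof (intro conjI ballI)
  show "set ps \<noteq> {}" using assms by (simp add: walk_def)
  have from0: "reach_in E (set ps) (ps ! 0) (ps ! j)" if "j < length ps" for j
    using that
  proof (induction j)
    case (Suc j)
    have "reach_in E (set ps) (ps ! j) (ps ! Suc j)"
      using assms Suc(2) unfolding walk_def by (intro reach_in_edge) auto
    then show ?case using Suc reach_in_trans by (metis Suc_lessD)
  qed simp
  fix u w assume "u \<in> set ps" "w \<in> set ps"
  then obtain i j where "i < length ps" "u = ps ! i" "j < length ps" "w = ps ! j"
    by (auto simp: in_set_conv_nth)
  then show "reach_in E (set ps) u w" using from0 reach_in_sym reach_in_trans by metis
qed

lemma induced_cycle_close_path:
  assumes g: "graph V E" and w: "walk (\<lambda>x y. {x, y} \<in> E) ps" and d: "distinct ps"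
    and nc: "chordless (\<lambda>x y. {x, y} \<in> E) ps" and len: "length ps \<ge> 3"
    and a: "a \<notin> set ps" and ah: "{a, ps ! 0} \<in> E" and al: "{a, ps ! (length ps - 1)} \<in> E"
    and inner: "\<forall>k. 0 < k \<and> Suc k < length ps \<longrightarrow> {a, ps ! k} \<notin> E"
    and sub: "set ps \<subseteq> V" "a \<in> V"
  shows "induced_cycle V E (ps @ [a])"
proof -
  let ?n = "length ps"
  have pp: "{ps ! i, ps ! j} \<in> E \<longleftrightarrow> (j = Suc i \<or> i = Suc j)" if "i < ?n" "j < ?n" for i j
  proof -
    consider "i = j" | "j = Suc i" | "i = Suc j" | "Suc i < j" | "Suc j < i" by linarith
    then show ?thesis
      using graph_no_loop[OF g] w nc[unfolded chordless_def, rule_format, of i j]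
        nc[unfolded chordless_def, rule_format, of j i] that
      unfolding walk_def by cases (auto simp: insert_commute)
  qed
  have pa: "{ps ! i, a} \<in> E \<longleftrightarrow> (i = 0 \<or> Suc i = ?n)" if i: "i < ?n" for i
  proof -
    consider "i = 0" | "i = ?n - 1" | "0 < i \<and> Suc i < ?n" using i by linarith
    then show ?thesis
      using ah al inner len i by cases (auto simp: insert_commute)
  qed
  have nth: "(ps @ [a]) ! i = (if i < ?n then ps ! i else a)" if "i \<le> ?n" for i
    using that by (auto simp: nth_append)
  show ?thesis
    unfolding induced_cycle_def
  proof (intro conjI allI impI)
    show "3 \<le> length (ps @ [a])" "distinct (ps @ [a])" "set (ps @ [a]) \<subseteq> V"
      using len d a sub by auto
  next
    fix i j assume "i < length (ps @ [a])" "j < length (ps @ [a])"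
    then have i: "i \<le> ?n" and j: "j \<le> ?n" by auto
    consider "i < ?n" "j < ?n" | "i < ?n" "j = ?n" | "i = ?n" "j < ?n" | "i = ?n" "j = ?n"
      using i j by linarith
    then show "{(ps @ [a]) ! i, (ps @ [a]) ! j} \<in> E \<longleftrightarrow>
          (j = Suc i mod length (ps @ [a]) \<or> i = Suc j mod length (ps @ [a]))"
      using pp[of i j] pa[of i] pa[of j] nth[OF i] nth[OF j] graph_no_loop[OF g] len
      by cases (auto simp: insert_commute)
  qed
qed

lemma has_K4_minorI:
  assumes "B0 \<subseteq> V" "B1 \<subseteq> V" "B2 \<subseteq> V" "B3 \<subseteq> V"
    and "connected_in E B0" "connected_in E B1" "connected_in E B2" "connected_in E B3"
    and "B0 \<inter> B1 = {}" "B0 \<inter> B2 = {}" "B0 \<inter> B3 = {}"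
    and "B1 \<inter> B2 = {}" "B1 \<inter> B3 = {}" "B2 \<inter> B3 = {}"
    and "\<exists>x\<in>B0. \<exists>y\<in>B1. {x, y} \<in> E" "\<exists>x\<in>B0. \<exists>y\<in>B2. {x, y} \<in> E"
    and "\<exists>x\<in>B0. \<exists>y\<in>B3. {x, y} \<in> E" "\<exists>x\<in>B1. \<exists>y\<in>B2. {x, y} \<in> E"
    and "\<exists>x\<in>B1. \<exists>y\<in>B3. {x, y} \<in> E" "\<exists>x\<in>B2. \<exists>y\<in>B3. {x, y} \<in> E"
  shows "has_K4_minor V E"
proof -
  define B :: "nat \<Rightarrow> _" where "B i = [B0, B1, B2, B3] ! i" for i
  have four: "i < 4 \<Longrightarrow> i = 0 \<or> i = 1 \<or> i = 2 \<or> i = 3" for i :: nat by linarith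
  have sym: "(\<exists>x\<in>X. \<exists>y\<in>Y. {x, y} \<in> E) \<longleftrightarrow> (\<exists>y\<in>Y. \<exists>x\<in>X. {y, x} \<in> E)" for X Y
    by (metis insert_commute)
  show ?thesis
    unfolding has_K4_minor_def
  proof (intro exI[of _ B] conjI allI impI)
    fix i j :: nat assume "i < 4" "j < 4" "i \<noteq> j"
    then show "B i \<inter> B j = {}" "\<exists>x\<in>B i. \<exists>y\<in>B j. {x, y} \<in> E"
      using four[of i] four[of j] assms sym by (auto simp: B_def)
  next
    fix i :: nat assume "i < 4"
    then show "B i \<subseteq> V" "connected_in E (B i)" using four[of i] assms by (auto simp: B_def)
  qed
qed

lemma K4_minor_of_clique:
  assumes "{p, q, r, s} \<subseteq> V" "distinct [p, q, r, s]"
    and "{p, q} \<in> E" "{p, r} \<in> E" "{p, s} \<in> E" "{q, r} \<in> E" "{q, s} \<in> E" "{r, s} \<in> E"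
  shows "has_K4_minor V E"
proof -
  have "connected_in E {x}" for x unfolding connected_in_def by simp
  then show ?thesis using assms by (intro has_K4_minorI[of "{p}" V "{q}" "{r}" "{s}"]) auto
qed

lemma K4_minor_of_induced_cycle_component:
  assumes ic: "induced_cycle V E cs" and n4: "length cs \<ge> 4"
    and KV: "K \<subseteq> V - set cs" and Kc: "connected_in E K"
    and att: "\<forall>i<length cs. \<exists>k\<in>K. {k, cs ! i} \<in> E"
  shows "has_K4_minor V E"
proof -
  define n where "n = length cs"
  have adj: "{cs ! i, cs ! j} \<in> E \<longleftrightarrow> (j = Suc i mod n \<or> i = Suc j mod n)" if "i < n" "j < n" for i j
    using ic that unfolding induced_cycle_def n_def by blast
  obtain c0 c1 rest where cs: "cs = c0 # c1 # rest"
    using n4 by (metis Suc_le_length_iff numeral_eq_Suc pred_numeral_simps(2,3))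
  have n: "n = length rest + 2" "length rest \<ge> 2" "rest \<noteq> []" using cs n4 unfolding n_def by auto
  have "walk (\<lambda>x y. {x, y} \<in> E) rest"
    unfolding walk_def
  proof (intro conjI allI impI)
    fix j assume "Suc j < length rest"
    then show "{rest ! j, rest ! Suc j} \<in> E" using adj[of "j + 2" "j + 3"] n cs by simp
  qed (use n in auto)
  then have restc: "connected_in E (set rest)" by (rule connected_in_walk)
  have e01: "{c0, c1} \<in> E" using adj[of 0 1] n cs by simp
  have e12: "{c1, rest ! 0} \<in> E" using adj[of 1 2] n cs by auto
  have e0l: "{c0, last rest} \<in> E"
  proof -
    have "cs ! (n - 1) = last cs" using n4 unfolding n_def by (metis One_nat_def last_conv_nth list.size(3) not_numeral_le_zero)
    also have "\<dots> = last rest" using cs n by auto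
    finally have "cs ! (n - 1) = last rest" .
    then show ?thesis using adj[of "n - 1" 0] n cs by (simp add: insert_commute)
  qed
  obtain k0 k1 k2 where "k0 \<in> K" "{k0, c0} \<in> E" "k1 \<in> K" "{k1, c1} \<in> E" "k2 \<in> K" "{k2, rest ! 0} \<in> E"
    using att[rule_format, of 0] att[rule_format, of 1] att[rule_format, of 2] n cs
    unfolding n_def by auto
  moreover have "connected_in E {x}" for x unfolding connected_in_def by simp
  moreover have "distinct (c0 # c1 # rest)" "set cs \<subseteq> V" using ic cs unfolding induced_cycle_def by auto
  moreover have "rest ! 0 \<in> set rest" "last rest \<in> set rest" using n by auto
  ultimately show ?thesis
    using KV Kc restc e01 e12 e0l cs
    by (intro has_K4_minorI[of K V "{c0}" "{c1}" "set rest" E]) (auto simp: insert_commute)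
qed

subsection \<open>Simplicial vertices of chordal graphs\<close>

lemma chordal_common_neighbour_ends_adjacent:
  assumes g: "graph V E" and ch: "chordal V E" and XV: "X \<subseteq> V" and a: "a \<in> V" "a \<notin> X"
    and s: "s1 \<in> X" "s2 \<in> X" "s1 \<noteq> s2" and r: "reach_in E X s1 s2"
    and as: "{a, s1} \<in> E" "{a, s2} \<in> E" and inner: "\<forall>x\<in>X - {s1, s2}. {a, x} \<notin> E"
  shows "{s1, s2} \<in> E"
proof (rule ccontr)
  assume nadj: "{s1, s2} \<notin> E"
  let ?R = "\<lambda>x y. x \<in> X \<and> y \<in> X \<and> {x, y} \<in> E"
  obtain ps where ps: "walk ?R ps" "hd ps = s1" "last ps = s2" "distinct ps" "chordless ?R ps"
    using rtranclp_chordless_walk[OF r[unfolded reach_in_def]] by blast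
  have ne: "ps \<noteq> []" using ps(1) by (simp add: walk_def)
  have h0: "ps ! 0 = s1" and hl: "ps ! (length ps - 1) = s2"
    using ps(2,3) ne by (simp_all add: hd_conv_nth last_conv_nth)
  have l2: "2 \<le> length ps"
    using ne h0 hl s(3) by (cases ps) (auto simp: Suc_le_eq)
  have l3: "3 \<le> length ps"
  proof (rule ccontr)
    assume "\<not> 3 \<le> length ps"
    then have "length ps = 2" using l2 by simp
    then show False using ps(1) h0 hl nadj unfolding walk_def by auto
  qed
  have setX: "set ps \<subseteq> X" using walk_set[OF ps(1) l2, of "\<lambda>x. x \<in> X"] by blast
  have inner_path: "\<forall>k. 0 < k \<and> Suc k < length ps \<longrightarrow> {a, ps ! k} \<notin> E"
  proof (intro allI impI)
    fix k assume k: "0 < k \<and> Suc k < length ps"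
    have "ps ! k \<noteq> ps ! 0" using nth_eq_iff_index_eq[OF ps(4), of k 0] k ne by simp
    moreover have "ps ! k \<noteq> ps ! (length ps - 1)"
      using nth_eq_iff_index_eq[OF ps(4), of k "length ps - 1"] k by (auto; linarith)
    moreover have "ps ! k \<in> X" using setX k by auto
    ultimately show "{a, ps ! k} \<notin> E" using inner h0 hl by blast
  qed
  have nc: "chordless (\<lambda>x y. {x, y} \<in> E) ps"
    unfolding chordless_def
  proof (intro allI impI)
    fix i j assume ij: "Suc i < j \<and> j < length ps"
    then have "ps ! i \<in> X" "ps ! j \<in> X" using setX by auto
    then show "{ps ! i, ps ! j} \<notin> E" using ps(5) ij unfolding chordless_def by blast
  qed
  have wE: "walk (\<lambda>x y. {x, y} \<in> E) ps" by (rule walk_mono[OF ps(1)]) simp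
  have "induced_cycle V E (ps @ [a])"
    by (rule induced_cycle_close_path[OF g wE ps(4) nc l3 _ _ _ inner_path])
      (use setX XV a as h0 hl in auto)
  moreover have "length (ps @ [a]) \<ge> 4" using l3 by simp
  ultimately show False using ch unfolding chordal_def by blast
qed

text \<open>\<open>S\<close> separates the component \<open>C\<close> from \<open>a\<close>; as a minimal separator of a chordal graph it is a
  clique.\<close>

lemma chordal_component_boundary_clique:
  fixes b :: 'a
  assumes g: "graph V E" and ch: "chordal V E" and WV: "W \<subseteq> V" and a: "a \<in> W"
  defines "U \<equiv> W - insert a {x\<in>W. {a, x} \<in> E}"
  defines "C \<equiv> {x\<in>U. reach_in E U b x}"
  defines "S \<equiv> {s\<in>W - C. \<exists>c\<in>C. {s, c} \<in> E}"
  shows "clique E S" and "\<And>s. s \<in> S \<Longrightarrow> {a, s} \<in> E \<and> s \<noteq> a"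
proof -
  have aC: "{a, c} \<notin> E" "c \<noteq> a" if "c \<in> C" for c
    using that unfolding C_def U_def by auto
  show SN: "{a, s} \<in> E \<and> s \<noteq> a" if "s \<in> S" for s
  proof -
    obtain c where c: "c \<in> C" "{s, c} \<in> E" "s \<in> W" "s \<notin> C" using \<open>s \<in> S\<close> unfolding S_def by auto
    have "s \<notin> U"
    proof
      assume sU: "s \<in> U"
      have "reach_in E U b c" "c \<in> U" using c unfolding C_def by auto
      moreover have "reach_in E U c s" using sU \<open>c \<in> U\<close> c(2) by (intro reach_in_edge) (auto simp: insert_commute)
      ultimately have "reach_in E U b s" using reach_in_trans by metis
      then show False using sU c(4) unfolding C_def by simp
    qed
    moreover have "s \<noteq> a" using aC[OF c(1)] c(2) by auto
    ultimately show ?thesis using c unfolding U_def by auto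
  qed
  have reachC: "reach_in E C b c" if "c \<in> C" for c
    using reach_in_component[of E U b c] that unfolding C_def by simp
  show "clique E S"
    unfolding clique_def
  proof (intro ballI impI)
    fix s1 s2 assume s: "s1 \<in> S" "s2 \<in> S" "s1 \<noteq> s2"
    obtain c1 c2 where c: "c1 \<in> C" "{s1, c1} \<in> E" "c2 \<in> C" "{s2, c2} \<in> E"
      using s unfolding S_def by auto
    define X where "X = C \<union> {s1, s2}"
    have "reach_in E X s1 c1" "reach_in E X c2 s2"
      using c unfolding X_def by (auto intro: reach_in_edge simp: insert_commute)
    moreover have "reach_in E X c1 c2"
      using reach_in_trans[OF reach_in_sym[OF reachC] reachC] c unfolding X_def
      by (meson reach_in_mono sup_ge1)
    ultimately have "reach_in E X s1 s2" using reach_in_trans by metis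
    moreover have "C \<subseteq> W" unfolding C_def U_def by blast
    then have "X \<subseteq> V" using WV SN[OF s(1)] SN[OF s(2)] s unfolding X_def S_def by blast
    moreover have "a \<notin> X" "\<forall>x\<in>X - {s1, s2}. {a, x} \<notin> E"
      using SN[OF s(1)] SN[OF s(2)] aC unfolding X_def by auto
    ultimately show "{s1, s2} \<in> E"
      using chordal_common_neighbour_ends_adjacent[OF g ch, of X a s1 s2] a WV SN[OF s(1)] SN[OF s(2)] s
      unfolding X_def by blast
  qed
qed

lemma simplicial_superset:
  "simplicial E W' z \<Longrightarrow> {x\<in>W. {z, x} \<in> E} \<subseteq> W' \<Longrightarrow> simplicial E W z"
  unfolding simplicial_def clique_def by blast

lemma clique_simplicial: "clique E W \<Longrightarrow> simplicial E W z"
  unfolding simplicial_def clique_def by blast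

lemma simplicial_outside_clique:
  assumes "clique E W \<or> (\<exists>z1\<in>W. \<exists>z2\<in>W. z1 \<noteq> z2 \<and> {z1, z2} \<notin> E \<and> simplicial E W z1 \<and> simplicial E W z2)"
    and S: "clique E S" and c: "c \<in> W - S"
  shows "\<exists>z\<in>W - S. simplicial E W z"
  using assms(1)
proof
  assume "clique E W"
  then show ?thesis using c clique_simplicial by metis
next
  assume "\<exists>z1\<in>W. \<exists>z2\<in>W. z1 \<noteq> z2 \<and> {z1, z2} \<notin> E \<and> simplicial E W z1 \<and> simplicial E W z2"
  then obtain z1 z2 where z: "z1 \<in> W" "z2 \<in> W" "z1 \<noteq> z2" "{z1, z2} \<notin> E"
    "simplicial E W z1" "simplicial E W z2" by blast
  then have "z1 \<notin> S \<or> z2 \<notin> S" using S unfolding clique_def by blast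
  then show ?thesis using z by blast
qed

text \<open>Dirac's lemma, for every induced subgraph.\<close>

lemma chordal_two_simplicial:
  assumes g: "graph V E" and ch: "chordal V E"
  shows "W \<subseteq> V \<Longrightarrow> clique E W \<or>
    (\<exists>z1\<in>W. \<exists>z2\<in>W. z1 \<noteq> z2 \<and> {z1, z2} \<notin> E \<and> simplicial E W z1 \<and> simplicial E W z2)"
proof (induction "card W" arbitrary: W rule: less_induct)
  case less
  have finW: "finite W" using less(2) g finite_subset unfolding graph_def by blast
  show ?case
  proof (cases "clique E W")
    case False
    then obtain a b where ab: "a \<in> W" "b \<in> W" "a \<noteq> b" "{a, b} \<notin> E"
      unfolding clique_def by auto
    define U where "U = W - insert a {x\<in>W. {a, x} \<in> E}"
    define C where "C = {x\<in>U. reach_in E U b x}"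
    define S where "S = {s\<in>W - C. \<exists>c\<in>C. {s, c} \<in> E}"
    note S = chordal_component_boundary_clique[OF g ch less(2) ab(1), where b = b,
        folded U_def, folded C_def, folded S_def]
    have bC: "b \<in> C" and CW: "C \<subseteq> W" and aC: "a \<notin> C \<union> S"
      using ab S(2) unfolding C_def U_def by auto
    have SW: "S \<subseteq> W" and CS: "C \<inter> S = {}" unfolding S_def by blast+
    txt \<open>Recurse on the two sides \<open>C \<union> S\<close> and \<open>W - C\<close> of the separator \<open>S\<close>.\<close>
    have "C \<union> S \<subset> W" using CW SW aC ab(1) by blast
    then have "card (C \<union> S) < card W" using finW by (rule psubset_card_mono[rotated])
    moreover have "C \<union> S \<subseteq> V" "b \<in> (C \<union> S) - S" using CW SW less(2) bC CS by auto
    ultimately obtain z1 where z1: "z1 \<in> C" "simplicial E (C \<union> S) z1"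
      using simplicial_outside_clique[OF less(1) S(1)] by blast
    have "W - C \<subset> W" using bC ab(2) by blast
    then have "card (W - C) < card W" using finW by (rule psubset_card_mono[rotated])
    moreover have "W - C \<subseteq> V" "a \<in> (W - C) - S" using less(2) ab(1) aC by auto
    ultimately obtain z2 where z2: "z2 \<in> W - C - S" "simplicial E (W - C) z2"
      using simplicial_outside_clique[OF less(1) S(1)] by blast
    have "{x\<in>W. {z1, x} \<in> E} \<subseteq> C \<union> S"
      using z1(1) unfolding S_def by (auto simp: insert_commute)
    then have "simplicial E W z1" by (rule simplicial_superset[OF z1(2)])
    moreover have "{x\<in>W. {z2, x} \<in> E} \<subseteq> W - C" using z2(1) unfolding S_def by blast
    then have "simplicial E W z2" by (rule simplicial_superset[OF z2(2)])
    moreover have "{z2, z1} \<notin> E" using z1(1) z2(1) unfolding S_def by blast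
    then have "z1 \<noteq> z2" "{z1, z2} \<notin> E" using z1(1) z2(1) by (auto simp: insert_commute)
    ultimately show ?thesis using z1 z2 CW by blast
  qed simp
qed

lemma chordal_simplicial_exists:
  assumes "graph V E" "chordal V E" "V \<noteq> {}"
  shows "\<exists>z\<in>V. simplicial E V z"
  using chordal_two_simplicial[OF assms(1,2) subset_refl]
proof
  assume "clique E V"
  then show ?thesis using assms(3) clique_simplicial by (metis ex_in_conv)
qed blast

subsection \<open>Chordal graphs are \<open>K\<^sub>1\<close> or \<open>2\<close>-trees\<close>

lemma graph_delete_vertex: "graph V E \<Longrightarrow> graph (V - {z}) {e\<in>E. z \<notin> e}"
  unfolding graph_def by blast

lemma chordal_delete_vertex:
  assumes "chordal V E"
  shows "chordal (V - {z}) {e\<in>E. z \<notin> e}"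
  unfolding chordal_def
proof
  assume "\<exists>cs. induced_cycle (V - {z}) {e\<in>E. z \<notin> e} cs \<and> 4 \<le> length cs"
  then obtain cs where cs: "induced_cycle (V - {z}) {e\<in>E. z \<notin> e} cs" "4 \<le> length cs" by blast
  have "z \<notin> set cs" using cs(1) unfolding induced_cycle_def by blast
  then have "{cs ! i, cs ! j} \<in> E \<longleftrightarrow> {cs ! i, cs ! j} \<in> {e\<in>E. z \<notin> e}"
    if "i < length cs" "j < length cs" for i j
    using that nth_mem by fastforce
  then have "induced_cycle V E cs" using cs(1) unfolding induced_cycle_def by auto
  then show False using assms cs(2) unfolding chordal_def by blast
qed

lemma has_K4_minor_delete_vertex:
  assumes "has_K4_minor (V - {z}) {e\<in>E. z \<notin> e}"
  shows "has_K4_minor V E"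
proof -
  obtain B :: "nat \<Rightarrow> _" where B: "\<forall>i<4. B i \<subseteq> V - {z} \<and> connected_in {e\<in>E. z \<notin> e} (B i)"
    "\<forall>i<4. \<forall>j<4. i \<noteq> j \<longrightarrow> B i \<inter> B j = {} \<and> (\<exists>x\<in>B i. \<exists>y\<in>B j. {x, y} \<in> {e\<in>E. z \<notin> e})"
    using assms unfolding has_K4_minor_def by blast
  have "connected_in E (B i)" if "i < 4" for i
  proof -
    have "z \<notin> B i" "connected_in {e\<in>E. z \<notin> e} (B i)" using B(1) that by blast+
    then show ?thesis using reach_in_delete_vertex_edges[of z "B i" E] unfolding connected_in_def by simp
  qed
  then show ?thesis unfolding has_K4_minor_def using B by (intro exI[of _ B]) blast
qed

lemma biconnected_delete_simplicial:
  assumes g: "graph V E" and b: "biconnected V E" and zV: "z \<in> V" and sz: "simplicial E V z"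
    and c: "card V \<ge> 3"
  shows "biconnected (V - {z}) {e\<in>E. z \<notin> e}"
proof -
  have no_cut: "\<not> cut_vertex V E w" for w using b unfolding biconnected_def by blast
  have "V - {z} \<noteq> {}"
  proof
    assume "V - {z} = {}"
    then have "card V \<le> card {z}" by (intro card_mono) auto
    then show False using c by simp
  qed
  moreover have "reach_in {e\<in>E. z \<notin> e} (V - {z}) u w" if "u \<in> V - {z}" "w \<in> V - {z}" for u w
    using no_cut[of z] zV that reach_in_delete_vertex_edges[of z "V - {z}" E]
    unfolding cut_vertex_def by auto
  moreover have "\<not> cut_vertex (V - {z}) {e\<in>E. z \<notin> e} w" for w
  proof
    assume "cut_vertex (V - {z}) {e\<in>E. z \<notin> e} w"
    then obtain u1 u2 where u: "w \<in> V - {z}" "u1 \<in> V - {z} - {w}" "u2 \<in> V - {z} - {w}"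
      "\<not> reach_in {e\<in>E. z \<notin> e} (V - {z} - {w}) u1 u2" unfolding cut_vertex_def by blast
    txt \<open>\<open>z\<close> is no cut vertex of \<open>V - {w}\<close> either, being simplicial there.\<close>
    have "reach_in E (V - {w}) u1 u2" using no_cut[of w] u unfolding cut_vertex_def by blast
    moreover have "simplicial E (V - {w}) z" using sz by (rule simplicial_superset) blast
    ultimately have "reach_in E (V - {w} - {z}) u1 u2"
      using reach_in_remove_simplicial[of z "V - {w}" E u1 u2] graph_no_loop[OF g] zV u by blast
    moreover have "V - {w} - {z} = V - {z} - {w}" by blast
    ultimately show False using u(4) reach_in_delete_vertex_edges[of z "V - {z} - {w}" E] by simp
  qed
  ultimately show ?thesis unfolding biconnected_def connected_in_def by blast
qed

lemma simplicial_neighbourhood_edge: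
  assumes g: "graph V E" and b: "biconnected V E" and k4: "\<not> has_K4_minor V E"
    and zV: "z \<in> V" and sz: "simplicial E V z" and c: "card V \<ge> 3"
  shows "\<exists>x y. {x, y} \<in> E \<and> {t. {z, t} \<in> E} = {x, y}"
proof -
  have fin: "finite V" using g unfolding graph_def by simp
  have conn: "\<forall>u\<in>V. \<forall>w\<in>V. reach_in E V u w"
    using b unfolding biconnected_def connected_in_def by simp
  have nbr: "t \<in> V \<and> t \<noteq> z" if "{z, t} \<in> E" for t using graph_edgeD[OF g that] by auto
  have two_more: "\<exists>t\<in>V. t \<noteq> u \<and> t \<noteq> z" for u
  proof (rule ccontr)
    assume "\<not> ?thesis"
    then have "card V \<le> card {u, z}" by (intro card_mono) auto
    also have "\<dots> \<le> 2" by (simp add: card_insert_if)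
    finally show False using c by simp
  qed
  obtain w where "w \<in> V" "w \<noteq> z" using two_more by blast
  then obtain x where x: "{z, x} \<in> E" using reach_in_first_edge[of E V z w] conn zV by metis
  obtain y where y: "{z, y} \<in> E" "y \<noteq> x"
  proof (rule ccontr)
    txt \<open>Otherwise \<open>x\<close> would separate \<open>z\<close> from the rest of the graph.\<close>
    assume "\<not> thesis"
    then have only: "\<And>y. {z, y} \<in> E \<Longrightarrow> y = x" using that by blast
    obtain t where t: "t \<in> V" "t \<noteq> x" "t \<noteq> z" using two_more by blast
    have "\<not> reach_in E (V - {x}) z t"
    proof
      assume "reach_in E (V - {x}) z t"
      then obtain u where "u \<in> V - {x}" "{z, u} \<in> E" using reach_in_first_edge t by metis
      then show False using only by blast
    qed
    then have "cut_vertex V E x" unfolding cut_vertex_def using nbr[OF x] zV t by blast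
    then show False using b unfolding biconnected_def by blast
  qed
  have xy: "{x, y} \<in> E" using simplicialD[OF sz _ _ x y(1)] y(2) nbr[OF x] nbr[OF y(1)] by blast
  have "t = x \<or> t = y" if t: "{z, t} \<in> E" for t
  proof (rule ccontr)
    assume t': "\<not> (t = x \<or> t = y)"
    have "{x, t} \<in> E" using simplicialD[OF sz _ _ x t] t' nbr[OF x] nbr[OF t] by blast
    moreover have "{y, t} \<in> E" using simplicialD[OF sz _ _ y(1) t] t' nbr[OF y(1)] nbr[OF t] by blast
    ultimately have "has_K4_minor V E"
      using K4_minor_of_clique[of z x y t V E] x y t t' xy nbr[OF x] nbr[OF y(1)] nbr[OF t] zV by auto
    then show False using k4 by simp
  qed
  then have "{t. {z, t} \<in> E} = {x, y}" using x y(1) by auto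
  then show ?thesis using xy by blast
qed

lemma connected_card_le_2_K1_or_two_tree:
  assumes g: "graph V E" and conn: "connected_in E V" and c: "card V \<le> 2"
  shows "is_K1 V E \<or> two_tree V E"
proof -
  have fin: "finite V" using g unfolding graph_def by simp
  have ne: "V \<noteq> {}" using conn unfolding connected_in_def by simp
  have edges: "\<exists>u w. u \<noteq> w \<and> u \<in> V \<and> w \<in> V \<and> e = {u, w}" if "e \<in> E" for e
    using g that unfolding graph_def by blast
  have "card V \<noteq> 0" using ne fin by simp
  then consider "card V = 1" | "card V = 2" using c by linarith
  then show ?thesis
  proof cases
    case 1
    then obtain v where v: "V = {v}" using card_1_singletonE by blast
    then have "E = {}" using edges by fastforce
    then show ?thesis using v unfolding is_K1_def by blast
  next
    case 2
    then obtain a b where ab: "V = {a, b}" "a \<noteq> b" by (meson card_2_iff)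
    have "reach_in E V a b" using conn ab unfolding connected_in_def by simp
    then obtain x where "x \<in> V" "{a, x} \<in> E" using reach_in_first_edge ab(2) by metis
    then have "{a, b} \<in> E" using ab graph_no_loop[OF g] by auto
    moreover have "E \<subseteq> {{a, b}}"
    proof
      fix e assume "e \<in> E"
      then obtain u w where "u \<noteq> w" "u \<in> V" "w \<in> V" "e = {u, w}" using edges by blast
      then show "e \<in> {{a, b}}" using ab by auto
    qed
    ultimately have "E = {{a, b}}" by blast
    then show ?thesis using ab two_tree.base by metis
  qed
qed

lemma graph_edges_at_vertex:
  assumes g: "graph V E" and Nz: "{t. {z, t} \<in> E} = {x, y}"
  shows "E = {e\<in>E. z \<notin> e} \<union> {{z, x}, {z, y}}"
proof -
  have zx: "{z, x} \<in> E" "{z, y} \<in> E" using Nz by (simp_all add: set_eq_iff)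
  have "e = {z, x} \<or> e = {z, y}" if e: "e \<in> E" "z \<in> e" for e
  proof -
    obtain u w where "e = {u, w}" using g e(1) unfolding graph_def by blast
    then obtain t where t: "e = {z, t}" using e(2) by (metis insertE insert_commute singletonD)
    then have "t \<in> {x, y}" using e(1) by (simp add: Nz[symmetric])
    then show ?thesis using t by blast
  qed
  then show ?thesis using zx by blast
qed

lemma chordal_two_tree:
  "graph V E \<Longrightarrow> biconnected V E \<Longrightarrow> \<not> has_K4_minor V E \<Longrightarrow> chordal V E \<Longrightarrow>
    is_K1 V E \<or> two_tree V E"
proof (induction "card V" arbitrary: V E rule: less_induct)
  case less
  note g = less(2) and b = less(3) and k4 = less(4) and ch = less(5)
  have fin: "finite V" using g unfolding graph_def by simp
  have conn: "connected_in E V" using b unfolding biconnected_def by blast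
  show ?case
  proof (cases "card V \<le> 2")
    case True
    then show ?thesis by (rule connected_card_le_2_K1_or_two_tree[OF g conn])
  next
    case False
    then have c3: "card V \<ge> 3" by simp
    have "V \<noteq> {}" using conn unfolding connected_in_def by simp
    then obtain z where zV: "z \<in> V" and sz: "simplicial E V z"
      using chordal_simplicial_exists[OF g ch] by blast
    obtain x y where xy: "{x, y} \<in> E" and Nz: "{t. {z, t} \<in> E} = {x, y}"
      using simplicial_neighbourhood_edge[OF g b k4 zV sz c3] by blast
    let ?V = "V - {z}" and ?E = "{e\<in>E. z \<notin> e}"
    have "is_K1 ?V ?E \<or> two_tree ?V ?E"
    proof (rule less(1))
      show "card ?V < card V" using zV fin c3 by simp
      show "graph ?V ?E" by (rule graph_delete_vertex[OF g])
      show "biconnected ?V ?E" by (rule biconnected_delete_simplicial[OF g b zV sz c3])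
      show "\<not> has_K4_minor ?V ?E" using k4 has_K4_minor_delete_vertex by metis
      show "chordal ?V ?E" by (rule chordal_delete_vertex[OF ch])
    qed
    moreover have "\<not> is_K1 ?V ?E"
    proof
      assume "is_K1 ?V ?E"
      then obtain v where "?V = {v}" unfolding is_K1_def by blast
      then have "card ?V = 1" by simp
      moreover have "card ?V = card V - 1" using zV fin by simp
      ultimately show False using c3 by linarith
    qed
    ultimately have tt: "two_tree ?V ?E" by blast
    have "{z, x} \<in> E" "{z, y} \<in> E" using Nz by (simp_all add: set_eq_iff)
    then have "{x, y} \<in> ?E" using xy graph_edgeD[OF g] by fastforce
    then have "two_tree (insert z ?V) (?E \<union> {{z, x}, {z, y}})"
      using two_tree.step[OF tt] by blast
    then show ?thesis using zV graph_edges_at_vertex[OF g Nz] by (simp add: insert_absorb)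
  qed
qed

subsection \<open>A \<open>1\<close>-perfect orientation with a sink forces chordality\<close>

lemma one_perfect_orientation_edge: "one_perfect_orientation V E D \<Longrightarrow> D x y \<Longrightarrow> {x, y} \<in> E"
  unfolding one_perfect_orientation_def orientation_def by blast

lemma one_perfect_orientation_flip:
  "one_perfect_orientation V E D \<Longrightarrow> {x, y} \<in> E \<Longrightarrow> D x y \<longleftrightarrow> \<not> D y x"
  unfolding one_perfect_orientation_def orientation_def by blast

lemma one_perfect_orientation_out_adjacent:
  "one_perfect_orientation V E D \<Longrightarrow> v \<in> V \<Longrightarrow> D v x \<Longrightarrow> D v y \<Longrightarrow> x \<noteq> y \<Longrightarrow> {x, y} \<in> E"
  unfolding one_perfect_orientation_def by blast

lemma one_perfect_orientation_arcD:
  "graph V E \<Longrightarrow> one_perfect_orientation V E D \<Longrightarrow> D u w \<Longrightarrow> u \<in> V \<and> w \<in> V \<and> u \<noteq> w"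
  using one_perfect_orientation_edge graph_edgeD by metis

lemma one_perfect_orientation_no_path_between_local_sinks:
  assumes opo: "one_perfect_orientation V E D" and SV: "S \<subseteq> V"
    and u: "u \<in> S" "\<forall>s\<in>S. \<not> D u s" and w: "w \<in> S" "\<forall>s\<in>S. \<not> D w s" and uw: "u \<noteq> w"
  shows "\<not> reach_in E S u w"
proof
  assume "reach_in E S u w"
  let ?R = "\<lambda>x y. x \<in> S \<and> y \<in> S \<and> {x, y} \<in> E"
  obtain ps where ps: "walk ?R ps" "hd ps = u" "last ps = w" "distinct ps" "chordless ?R ps"
    using rtranclp_chordless_walk[OF \<open>reach_in E S u w\<close>[unfolded reach_in_def]] by blast
  have ne: "ps \<noteq> []" using ps(1) by (simp add: walk_def)
  have h0: "ps ! 0 = u" and hl: "ps ! (length ps - 1) = w"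
    using ps(2,3) ne by (simp_all add: hd_conv_nth last_conv_nth)
  have st: "?R (ps ! k) (ps ! Suc k)" if "Suc k < length ps" for k
    using ps(1) that unfolding walk_def by blast
  txt \<open>Every edge of the chordless path points back towards \<open>u\<close>: two arcs leaving the same
    vertex of the path would force a chord.\<close>
  have points_back: "D (ps ! Suc k) (ps ! k)" if "Suc k < length ps" for k
    using that
  proof (induction k)
    case 0
    then show ?case using st[OF 0] u h0 one_perfect_orientation_flip[OF opo] by auto
  next
    case (Suc k)
    have prev: "D (ps ! Suc k) (ps ! k)" using Suc by simp
    have e: "?R (ps ! Suc k) (ps ! Suc (Suc k))" using st[OF Suc(2)] .
    have "\<not> D (ps ! Suc k) (ps ! Suc (Suc k))"
    proof
      assume "D (ps ! Suc k) (ps ! Suc (Suc k))"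
      moreover have "ps ! k \<noteq> ps ! Suc (Suc k)"
        using nth_eq_iff_index_eq[OF ps(4), of k "Suc (Suc k)"] Suc(2) by simp
      ultimately have "{ps ! k, ps ! Suc (Suc k)} \<in> E"
        using one_perfect_orientation_out_adjacent[OF opo _ prev] e SV by blast
      moreover have "ps ! k \<in> S" using st[of k] Suc(2) by simp
      ultimately show False using ps(5) Suc(2) e unfolding chordless_def by blast
    qed
    then show ?case using one_perfect_orientation_flip[OF opo] e by blast
  qed
  have "2 \<le> length ps" using ne h0 hl uw by (cases ps) (auto simp: Suc_le_eq)
  then obtain m where m: "length ps = Suc (Suc m)" by (metis add_2_eq_Suc le_Suc_ex)
  then show False using points_back[of m] hl st[of m] w by auto
qed

lemma cyclic_closure:
  assumes "i0 < n" "i0 \<in> A" and closed: "\<forall>i<n. i \<in> A \<longrightarrow> Suc i mod n \<in> A"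
  shows "\<forall>j<n. j \<in> A"
proof -
  have all: "(i0 + k) mod n \<in> A" for k
  proof (induction k)
    case (Suc k)
    have "Suc ((i0 + k) mod n) mod n \<in> A" using closed Suc assms(1) by simp
    then show ?case by (simp add: mod_Suc_eq)
  qed (use assms in simp)
  show ?thesis
  proof (intro allI impI)
    fix j assume "j < n"
    then have "(i0 + (n - i0 + j)) mod n = j" using assms(1) by simp
    then show "j \<in> A" using all[of "n - i0 + j"] by simp
  qed
qed

lemma cyclic_closure_pred:
  assumes "i0 < n" "i0 \<in> A" and closed: "\<forall>i<n. Suc i mod n \<in> A \<longrightarrow> i \<in> A"
  shows "\<forall>j<n. j \<in> A"
proof (rule ccontr)
  assume "\<not> (\<forall>j<n. j \<in> A)"
  then obtain j0 where "j0 < n" "j0 \<in> - A" by blast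
  moreover have "\<forall>i<n. i \<in> - A \<longrightarrow> Suc i mod n \<in> - A" using closed by blast
  ultimately have "\<forall>j<n. j \<in> - A" by (rule cyclic_closure)
  then show False using assms(1,2) by blast
qed

lemma add_mod_neq_self:
  fixes i n k :: nat
  assumes "i < n" "0 < k" "k < n"
  shows "(i + k) mod n \<noteq> i"
proof (cases "i + k < n")
  case False
  then have "(i + k) mod n = i + k - n" using assms by (simp add: mod_if)
  then show ?thesis using assms False by simp
qed (use assms in simp)

lemma induced_cycle_one_perfect_oriented:
  assumes opo: "one_perfect_orientation V E D" and ic: "induced_cycle V E cs" and n4: "length cs \<ge> 4"
  defines "n \<equiv> length cs"
  shows "(\<forall>i<n. D (cs ! i) (cs ! (Suc i mod n))) \<or> (\<forall>i<n. D (cs ! (Suc i mod n)) (cs ! i))"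
proof -
  define s where "s i = Suc i mod n" for i
  have n4': "n \<ge> 4" using n4 unfolding n_def .
  have sl: "s i < n" for i unfolding s_def using n4' by simp
  have adj: "{cs ! i, cs ! j} \<in> E \<longleftrightarrow> (j = s i \<or> i = s j)" if "i < n" "j < n" for i j
    using ic that unfolding induced_cycle_def n_def s_def by blast
  have dist: "distinct cs" and csV: "set cs \<subseteq> V" using ic unfolding induced_cycle_def by auto
  have edge: "{cs ! i, cs ! s i} \<in> E" if "i < n" for i using adj[OF that sl] by simp
  have s2: "s (s i) = (i + 2) mod n" and s3: "s (s (s i)) = (i + 3) mod n" for i
    unfolding s_def by (simp_all add: mod_Suc_eq numeral_3_eq_3)
  have no_out_peak: False if i: "i < n" and d: "D (cs ! s i) (cs ! i)" "D (cs ! s i) (cs ! s (s i))" for i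
  proof -
    have "i \<noteq> s (s i)" using add_mod_neq_self[of i n 2] i n4' s2 by simp
    then have "cs ! i \<noteq> cs ! s (s i)" using nth_eq_iff_index_eq[OF dist] i sl unfolding n_def by metis
    then have "{cs ! i, cs ! s (s i)} \<in> E"
      using one_perfect_orientation_out_adjacent[OF opo _ d] csV sl unfolding n_def by (meson nth_mem subsetD)
    then have "s (s i) = s i \<or> i = s (s (s i))" using adj[OF i sl] by simp
    moreover have "s (s i) \<noteq> s i" using add_mod_neq_self[of "s i" n 1] sl n4' by (simp add: s_def)
    moreover have "(i + 3) mod n \<noteq> i" using add_mod_neq_self[of i n 3] i n4' by simp
    ultimately show False using s3 by metis
  qed
  show ?thesis
  proof (rule disjCI)
    assume "\<not> (\<forall>i<n. D (cs ! (Suc i mod n)) (cs ! i))"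
    txt \<open>Once one edge of the cycle points backwards, all of them do.\<close>
    have "\<forall>i<n. i \<in> {i. D (cs ! s i) (cs ! i)}" if "i0 < n" "\<not> D (cs ! i0) (cs ! s i0)" for i0
    proof (rule cyclic_closure)
      show "i0 \<in> {i. D (cs ! s i) (cs ! i)}"
        using that one_perfect_orientation_flip[OF opo edge[OF that(1)]] by blast
      show "\<forall>i<n. i \<in> {i. D (cs ! s i) (cs ! i)} \<longrightarrow> Suc i mod n \<in> {i. D (cs ! s i) (cs ! i)}"
        using no_out_peak one_perfect_orientation_flip[OF opo edge[OF sl]] unfolding s_def by blast
    qed fact
    then show "\<forall>i<n. D (cs ! i) (cs ! (Suc i mod n))"
      using \<open>\<not> (\<forall>i<n. D (cs ! (Suc i mod n)) (cs ! i))\<close> unfolding s_def by blast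
  qed
qed

lemma induced_cycle_one_perfect_out_arc:
  assumes opo: "one_perfect_orientation V E D" and ic: "induced_cycle V E cs" and n4: "length cs \<ge> 4"
    and i: "i < length cs"
  shows "\<exists>j<length cs. D (cs ! i) (cs ! j)"
  using induced_cycle_one_perfect_oriented[OF opo ic n4]
proof
  assume "\<forall>j<length cs. D (cs ! j) (cs ! (Suc j mod length cs))"
  then show ?thesis using i by (intro exI[of _ "Suc i mod length cs"]) (auto intro: mod_less_divisor)
next
  assume "\<forall>j<length cs. D (cs ! (Suc j mod length cs)) (cs ! j)"
  moreover have "Suc ((i + length cs - 1) mod length cs) mod length cs = i"
  proof -
    have "Suc (i + length cs - 1) = i + length cs" using i by simp
    then show ?thesis using i by (metis mod_Suc_eq mod_add_self2 mod_less)
  qed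
  ultimately show ?thesis using i by (metis mod_less_divisor gr_implies_not0 not_gr0)
qed

lemma connected_component_touches:
  assumes conn: "connected_in E V" and v: "v \<in> V - T" and t0: "t0 \<in> T" and TV: "T \<subseteq> V"
  shows "\<exists>t\<in>T. \<exists>k\<in>{x\<in>V - T. reach_in E (V - T) v x}. {k, t} \<in> E"
proof -
  let ?K = "{x\<in>V - T. reach_in E (V - T) v x}"
  have "(\<lambda>x y. x \<in> V \<and> y \<in> V \<and> {x, y} \<in> E)\<^sup>*\<^sup>* v t0"
    using conn v t0 TV unfolding connected_in_def reach_in_def by blast
  then have "(\<exists>t\<in>T. \<exists>k\<in>?K. {k, t} \<in> E) \<or> (t0 \<notin> T \<and> reach_in E (V - T) v t0)"
  proof (induction rule: rtranclp_induct)
    case (step y t)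
    show ?case
    proof (cases "\<exists>t\<in>T. \<exists>k\<in>?K. {k, t} \<in> E")
      case False
      then have y: "y \<notin> T" "reach_in E (V - T) v y" using step(3) by auto
      show ?thesis
      proof (cases "t \<in> T")
        case True
        then show ?thesis using y step(2) by blast
      next
        case False
        then have "reach_in E (V - T) y t" using step(2) y by (intro reach_in_edge) auto
        then show ?thesis using reach_in_trans[OF y(2)] False by blast
      qed
    qed simp
  qed (use v in simp)
  then show ?thesis using t0 by blast
qed

text \<open>If every cycle vertex attached to \<open>K\<close> sent an arc into \<open>K\<close>, attachment would propagate along
  the directed cycle and \<open>K\<close> would be attached to the whole cycle.\<close>

lemma induced_cycle_attached_vertex_without_arc_into:
  assumes opo: "one_perfect_orientation V E D" and ic: "induced_cycle V E cs" and n4: "length cs \<ge> 4"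
    and k4: "\<not> has_K4_minor V E" and KV: "K \<subseteq> V - set cs" and Kc: "connected_in E K"
    and i0: "i0 < length cs" "\<exists>k\<in>K. {k, cs ! i0} \<in> E"
  shows "\<exists>i<length cs. (\<exists>k\<in>K. {k, cs ! i} \<in> E) \<and> (\<forall>k\<in>K. \<not> D (cs ! i) k)"
proof (rule ccontr)
  define n where "n = length cs"
  define att where "att i \<longleftrightarrow> (\<exists>k\<in>K. {k, cs ! i} \<in> E)" for i
  assume "\<not> ?thesis"
  then have out: "\<exists>k\<in>K. D (cs ! i) k" if "i < n" "att i" for i
    using that unfolding att_def n_def by blast
  have csV: "set cs \<subseteq> V" using ic unfolding induced_cycle_def by blast
  have spread: "att j" if ij: "i < n" "j < n" "att i" "D (cs ! i) (cs ! j)" for i j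
  proof -
    obtain k where k: "k \<in> K" "D (cs ! i) k" using out ij by blast
    have "cs ! j \<in> set cs" using ij(2) unfolding n_def by (rule nth_mem)
    then have "k \<noteq> cs ! j" using k(1) KV by blast
    then have "{k, cs ! j} \<in> E"
      using one_perfect_orientation_out_adjacent[OF opo _ k(2) ij(4)] csV ij(1)
      unfolding n_def by (meson nth_mem subsetD)
    then show ?thesis using k unfolding att_def by blast
  qed
  have n0: "0 < n" using n4 unfolding n_def by linarith
  have i0': "i0 < n" "i0 \<in> {i. att i}" using i0 unfolding att_def n_def by auto
  have "\<forall>i<n. i \<in> {i. att i}"
    using induced_cycle_one_perfect_oriented[OF opo ic n4, folded n_def]
  proof
    assume fwd: "\<forall>i<n. D (cs ! i) (cs ! (Suc i mod n))"
    have "\<forall>i<n. i \<in> {i. att i} \<longrightarrow> Suc i mod n \<in> {i. att i}"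
    proof (intro allI impI)
      fix i assume "i < n" "i \<in> {i. att i}"
      then show "Suc i mod n \<in> {i. att i}" using spread[of i "Suc i mod n"] fwd n0 by simp
    qed
    then show ?thesis by (rule cyclic_closure[OF i0'])
  next
    assume bwd: "\<forall>i<n. D (cs ! (Suc i mod n)) (cs ! i)"
    have "\<forall>i<n. Suc i mod n \<in> {i. att i} \<longrightarrow> i \<in> {i. att i}"
    proof (intro allI impI)
      fix i assume "i < n" "Suc i mod n \<in> {i. att i}"
      then show "i \<in> {i. att i}" using spread[of "Suc i mod n" i] bwd n0 by simp
    qed
    then show ?thesis by (rule cyclic_closure_pred[OF i0'])
  qed
  then have "has_K4_minor V E"
    using K4_minor_of_induced_cycle_component[OF ic n4 KV Kc] unfolding att_def n_def by simp
  then show False using k4 by simp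
qed

lemma one_perfect_sink_chordal:
  assumes g: "graph V E" and conn: "connected_in E V" and k4: "\<not> has_K4_minor V E"
    and opo: "one_perfect_orientation V E D" and vV: "v \<in> V" and sk: "sink D v"
  shows "chordal V E"
proof (rule ccontr)
  assume "\<not> chordal V E"
  then obtain cs where ic: "induced_cycle V E cs" and n4: "length cs \<ge> 4" unfolding chordal_def by blast
  have csV: "set cs \<subseteq> V" using ic unfolding induced_cycle_def by blast
  have sk': "\<not> D v x" for x using sk unfolding sink_def by blast
  have vC: "v \<notin> set cs"
  proof
    assume "v \<in> set cs"
    then obtain i where "i < length cs" "v = cs ! i" by (auto simp: in_set_conv_nth)
    then show False using induced_cycle_one_perfect_out_arc[OF opo ic n4] sk' by blast
  qed
  define K where "K = {x\<in>V - set cs. reach_in E (V - set cs) v x}"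
  have vK: "v \<in> K" using vV vC unfolding K_def by simp
  have KV: "K \<subseteq> V - set cs" unfolding K_def by blast
  have rK: "reach_in E K v x" if "x \<in> K" for x
    using reach_in_component[of E "V - set cs" v x] that unfolding K_def by simp
  have Kc: "connected_in E K"
    unfolding connected_in_def
  proof (intro conjI ballI)
    fix x y assume "x \<in> K" "y \<in> K"
    then show "reach_in E K x y" using reach_in_trans[OF reach_in_sym[OF rK] rK] by blast
  qed (use vK in blast)
  have "0 < length cs" using n4 by linarith
  then have "cs ! 0 \<in> set cs" by (rule nth_mem)
  then obtain t k where "t \<in> set cs" "k \<in> K" "{k, t} \<in> E"
    using connected_component_touches[OF conn _ _ csV, of v] vV vC unfolding K_def by blast
  then obtain i0 where "i0 < length cs" "\<exists>k\<in>K. {k, cs ! i0} \<in> E" by (metis in_set_conv_nth)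
  then obtain i where i: "i < length cs" "\<exists>k\<in>K. {k, cs ! i} \<in> E" "\<forall>k\<in>K. \<not> D (cs ! i) k"
    using induced_cycle_attached_vertex_without_arc_into[OF opo ic n4 k4 KV Kc] by blast
  define c where "c = cs ! i"
  have c: "c \<in> V" "c \<notin> K" using i csV KV unfolding c_def by (auto simp: subset_iff)
  obtain k where k: "k \<in> K" "{k, c} \<in> E" using i unfolding c_def by blast
  txt \<open>Now \<open>v\<close> and \<open>c\<close> are two sinks of the orientation restricted to \<open>K \<union> {c}\<close>.\<close>
  have "\<not> D c c" using graph_no_loop[OF g] one_perfect_orientation_edge[OF opo] by fastforce
  then have "\<not> reach_in E (insert c K) v c"
    using one_perfect_orientation_no_path_between_local_sinks[OF opo, of "insert c K" v c]
      KV c vK sk' i(3) vC unfolding c_def by auto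
  moreover have "reach_in E (insert c K) v c"
    using reach_in_mono[OF rK[OF k(1)]] reach_in_edge[of k "insert c K" c E] k reach_in_trans
    by (metis subset_insertI insertI1 insertI2)
  ultimately show False by contradiction
qed

subsection \<open>\<open>2\<close>-trees have \<open>1\<close>-perfect orientations with any prescribed sink\<close>

lemma two_tree_graph: "two_tree V E \<Longrightarrow> graph V E"
proof (induction rule: two_tree.induct)
  case (base a b)
  then show ?case unfolding graph_def by blast
next
  case (step V E x y z)
  have "x \<in> V" "y \<in> V" using graph_edgeD[OF step(4,2)] by auto
  then have "z \<noteq> x" "z \<noteq> y" using step(3) by auto
  then show ?case using step(4) \<open>x \<in> V\<close> \<open>y \<in> V\<close> unfolding graph_def by blast
qed

lemma two_tree_vertex_on_edge: "two_tree V E \<Longrightarrow> v \<in> V \<Longrightarrow> \<exists>u. {v, u} \<in> E"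
proof (induction rule: two_tree.induct)
  case (base a b)
  then show ?case by (metis insert_commute insertE singletonD singletonI)
qed blast

text \<open>A new vertex \<open>z\<close> is joined to both ends of the edge \<open>{p, q}\<close>; the new edges point into \<open>z\<close>
  from the ends in \<open>I\<close> and out of \<open>z\<close> towards the other ends.\<close>

lemma orientation_add_vertex:
  assumes g: "graph V E" and opo: "one_perfect_orientation V E D" and z: "z \<notin> V"
    and pq: "{p, q} \<in> E" and I: "I \<subseteq> {p, q}"
  shows "orientation (insert z V) (E \<union> {{z, p}, {z, q}})
    (\<lambda>u w. D u w \<or> (u = z \<and> w \<in> {p, q} - I) \<or> (u \<in> I \<and> w = z))"
  unfolding orientation_def
proof (intro conjI allI impI)
  have arc: "u \<in> V \<and> w \<in> V \<and> u \<noteq> w" if "D u w" for u w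
    using one_perfect_orientation_arcD[OF g opo that] .
  fix x y
  show "{x, y} \<in> E \<union> {{z, p}, {z, q}}" if "D x y \<or> (x = z \<and> y \<in> {p, q} - I) \<or> (x \<in> I \<and> y = z)"
  proof -
    from that consider "D x y" | "x = z" "y = p \<or> y = q" | "y = z" "x = p \<or> x = q" using I by blast
    then show ?thesis by cases (auto simp: insert_commute dest: one_perfect_orientation_edge[OF opo])
  qed
  show "(D x y \<or> (x = z \<and> y \<in> {p, q} - I) \<or> (x \<in> I \<and> y = z)) \<longleftrightarrow>
        \<not> (D y x \<or> (y = z \<and> x \<in> {p, q} - I) \<or> (y \<in> I \<and> x = z))"
    if e: "{x, y} \<in> E \<union> {{z, p}, {z, q}}"
  proof (cases "{x, y} \<in> E")
    case True
    then have "x \<noteq> z" "y \<noteq> z" using graph_edgeD[OF g True] z by auto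
    then show ?thesis using one_perfect_orientation_flip[OF opo True] by simp
  next
    case False
    then have "(x = z \<and> (y = p \<or> y = q)) \<or> (y = z \<and> (x = p \<or> x = q))"
      using e by (auto simp: doubleton_eq_iff)
    moreover have "\<not> D x z" "\<not> D z x" "\<not> D y z" "\<not> D z y" using arc z by blast+
    moreover have "z \<noteq> p" "z \<noteq> q" using graph_edgeD[OF g pq] z by auto
    ultimately show ?thesis by auto
  qed
qed

lemma one_perfect_orientation_add_vertex:
  assumes g: "graph V E" and opo: "one_perfect_orientation V E D" and z: "z \<notin> V"
    and pq: "{p, q} \<in> E" and I: "I \<subseteq> {p, q}" and I_out: "\<forall>u\<in>I. \<forall>w. D u w \<longrightarrow> w \<in> {p, q}"
  shows "one_perfect_orientation (insert z V) (E \<union> {{z, p}, {z, q}})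
    (\<lambda>u w. D u w \<or> (u = z \<and> w \<in> {p, q} - I) \<or> (u \<in> I \<and> w = z))"
  unfolding one_perfect_orientation_def
proof (intro conjI ballI allI impI)
  show "orientation (insert z V) (E \<union> {{z, p}, {z, q}})
    (\<lambda>u w. D u w \<or> (u = z \<and> w \<in> {p, q} - I) \<or> (u \<in> I \<and> w = z))"
    by (rule orientation_add_vertex[OF g opo z pq I])
  have arc: "u \<in> V \<and> w \<in> V \<and> u \<noteq> w" if "D u w" for u w
    using one_perfect_orientation_arcD[OF g opo that] .
  have zI: "z \<notin> I" using I z graph_edgeD[OF g pq] by blast
  fix v x y
  assume d: "(D v x \<or> (v = z \<and> x \<in> {p, q} - I) \<or> (v \<in> I \<and> x = z)) \<and>
    (D v y \<or> (v = z \<and> y \<in> {p, q} - I) \<or> (v \<in> I \<and> y = z)) \<and> x \<noteq> y"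
  show "{x, y} \<in> E \<union> {{z, p}, {z, q}}"
  proof (cases "v = z")
    case True
    then have "\<not> D v x" "\<not> D v y" using arc z by blast+
    then have "x \<in> {p, q}" "y \<in> {p, q}" "x \<noteq> y" using d True zI by auto
    then have "{x, y} = {p, q}" by auto
    then show ?thesis using pq by simp
  next
    case False
    then consider "D v x" "D v y" | "D v y" "x = z" "v \<in> I" | "D v x" "y = z" "v \<in> I"
      using d by blast
    then show ?thesis
    proof cases
      case 1
      then have "v \<in> V" using arc by blast
      then show ?thesis using one_perfect_orientation_out_adjacent[OF opo _ 1] d by blast
    next
      case 2
      then have "y = p \<or> y = q" using I_out by blast
      then show ?thesis using 2 by auto
    next
      case 3
      then have "x = p \<or> x = q" using I_out by blast
      then show ?thesis using 3 by (auto simp: insert_commute)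
    qed
  qed
qed

lemma one_perfect_orientation_add_vertex_new_edge:
  assumes g: "graph V E" and opo: "one_perfect_orientation V E D" and z: "z \<notin> V"
    and pq: "{p, q} \<in> E" and Dp: "sink D p" and Dq: "\<forall>w. D q w \<longleftrightarrow> w = p"
    and xy: "{x, y} = {z, p}"
  shows "\<exists>D'. one_perfect_orientation (insert z V) (E \<union> {{z, p}, {z, q}}) D' \<and> sink D' x \<and>
      (\<forall>w. D' y w \<longleftrightarrow> w = x)"
proof -
  have Dp': "\<not> D p w" for w using Dp unfolding sink_def by blast
  have no_z: "\<not> D z w" for w using one_perfect_orientation_arcD[OF g opo] z by blast
  have pqV: "p \<in> V" "q \<in> V" using graph_edgeD[OF g pq] by auto
  let ?D = "\<lambda>I u w. D u w \<or> (u = z \<and> w \<in> {p, q} - I) \<or> (u \<in> I \<and> w = z)"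
  have out_pq: "\<forall>u\<in>{p, q}. \<forall>w. D u w \<longrightarrow> w \<in> {p, q}" using Dq Dp' by blast
  have opo': "one_perfect_orientation (insert z V) (E \<union> {{z, p}, {z, q}}) (?D I)"
    if I: "I \<subseteq> {p, q}" for I
    by (rule one_perfect_orientation_add_vertex[OF g opo z pq I]) (use out_pq I in blast)
  from xy consider "x = z" "y = p" | "x = p" "y = z" by (auto simp: doubleton_eq_iff)
  then show ?thesis
  proof cases
    case 1
    then have "sink (?D {p, q}) x" "\<forall>w. ?D {p, q} y w \<longleftrightarrow> w = x"
      using no_z Dp' z pqV unfolding sink_def by auto
    then show ?thesis using opo'[of "{p, q}"] by blast
  next
    case 2
    then have "sink (?D {q}) x" "\<forall>w. ?D {q} y w \<longleftrightarrow> w = x"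
      using no_z Dp' z pqV graph_edgeD[OF g pq] unfolding sink_def by auto
    then show ?thesis using opo'[of "{q}"] by blast
  qed
qed

lemma two_tree_edge_sink_orientation:
  "two_tree V E \<Longrightarrow> {x, y} \<in> E \<Longrightarrow>
    \<exists>D. one_perfect_orientation V E D \<and> sink D x \<and> (\<forall>w. D y w \<longleftrightarrow> w = x)"
proof (induction arbitrary: x y rule: two_tree.induct)
  case (base a b)
  define D where "D u w \<longleftrightarrow> u = y \<and> w = x" for u w
  have xy: "{x, y} = {a, b}" "x \<noteq> y" using base by (auto simp: doubleton_eq_iff)
  have "one_perfect_orientation {a, b} {{a, b}} D"
    unfolding one_perfect_orientation_def orientation_def D_def
    using xy by (auto simp: doubleton_eq_iff)
  moreover have "sink D x" unfolding sink_def D_def using xy by simp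
  ultimately show ?case unfolding D_def by blast
next
  case (step V E p q z)
  have g: "graph V E" using two_tree_graph[OF step(1)] .
  show ?case
  proof (cases "{x, y} \<in> E")
    case True
    then obtain D where D: "one_perfect_orientation V E D" "sink D x" "\<forall>w. D y w \<longleftrightarrow> w = x"
      using step.IH by blast
    let ?D = "\<lambda>u w. D u w \<or> (u = z \<and> w \<in> {p, q} - {}) \<or> (u \<in> {} \<and> w = z)"
    have "one_perfect_orientation (insert z V) (E \<union> {{z, p}, {z, q}}) ?D"
      by (rule one_perfect_orientation_add_vertex[OF g D(1) step(3,2)]) simp_all
    moreover have "x \<noteq> z" "y \<noteq> z" using graph_edgeD[OF g True] step(3) by auto
    then have "sink ?D x" "\<forall>w. ?D y w \<longleftrightarrow> w = x" using D(2,3) unfolding sink_def by auto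
    ultimately show ?thesis by blast
  next
    case False
    then consider "{x, y} = {z, p}" | "{x, y} = {z, q}" using step.prems by blast
    then show ?thesis
    proof cases
      case 1
      obtain D where "one_perfect_orientation V E D" "sink D p" "\<forall>w. D q w \<longleftrightarrow> w = p"
        using step.IH step(2) by blast
      then show ?thesis using one_perfect_orientation_add_vertex_new_edge[OF g _ step(3,2) _ _ 1] by blast
    next
      case 2
      have qp: "{q, p} \<in> E" using step(2) by (simp add: insert_commute)
      obtain D where "one_perfect_orientation V E D" "sink D q" "\<forall>w. D p w \<longleftrightarrow> w = q"
        using step.IH qp by blast
      moreover have "E \<union> {{z, p}, {z, q}} = E \<union> {{z, q}, {z, p}}" by blast
      ultimately show ?thesis using one_perfect_orientation_add_vertex_new_edge[OF g _ step(3) qp _ _ 2] by simp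
    qed
  qed
qed

lemma two_tree_one_perfect_sink:
  "two_tree V E \<Longrightarrow> v \<in> V \<Longrightarrow> \<exists>D. one_perfect_orientation V E D \<and> sink D v"
  using two_tree_vertex_on_edge two_tree_edge_sink_orientation by metis

lemma K1_one_perfect_sink: "is_K1 V E \<Longrightarrow> \<exists>D. one_perfect_orientation V E D \<and> sink D v"
  unfolding is_K1_def one_perfect_orientation_def orientation_def sink_def by auto

theorem lemma5p2:
  fixes V :: "'a set" and E :: "'a set set"
  assumes "graph V E" and "biconnected V E" and "\<not> has_K4_minor V E"
  shows "((\<exists>v\<in>V. \<exists>D. one_perfect_orientation V E D \<and> sink D v)
            \<longleftrightarrow> (\<forall>v\<in>V. \<exists>D. one_perfect_orientation V E D \<and> sink D v))
       \<and> ((\<forall>v\<in>V. \<exists>D. one_perfect_orientation V E D \<and> sink D v) \<longleftrightarrow> chordal V E)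
       \<and> (chordal V E \<longleftrightarrow> is_K1 V E \<or> two_tree V E)"
proof -
  let ?some = "\<exists>v\<in>V. \<exists>D. one_perfect_orientation V E D \<and> sink D v"
  let ?every = "\<forall>v\<in>V. \<exists>D. one_perfect_orientation V E D \<and> sink D v"
  have conn: "connected_in E V" using assms(2) unfolding biconnected_def by blast
  then have "?every \<longrightarrow> ?some" unfolding connected_in_def by (metis ex_in_conv)
  moreover have "?some \<longrightarrow> chordal V E"
    using one_perfect_sink_chordal[OF assms(1) conn assms(3)] by metis
  moreover have "chordal V E \<longrightarrow> is_K1 V E \<or> two_tree V E"
    using chordal_two_tree[OF assms] by metis
  moreover have "is_K1 V E \<or> two_tree V E \<longrightarrow> ?every"
    using K1_one_perfect_sink two_tree_one_perfect_sink by metis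
  ultimately show ?thesis by argo
qed

end
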